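(* For all $0<q<1$, the Chern character of the Fredholm module $(\mathcal{A}(S^2_q),\mathcal{H},F)$ associated to the spectral triple $(\mathcal{A}(S^2_q),\mathcal{H},D)$ pairs with the class of the projector $$p'=\frac{1}{2}\begin{pmatrix}1+b & a^* \\ a & 1-q^{-2}b\end{pmatrix}\in\mathcal{A}(S^2_q)\otimes\mathrm{Mat}_2(\mathbb{C})$$ to give $\mathrm{ch}^F([p'])=-1$. In particular the Chern character of this spectral triple is non-trivial.
   Context: Let $0<q<1$ and let $\mathcal{A}(S^2_q)$ be the $*$-algebra of the equatorial Podleś sphere, generated by $a,a^*$ and $b=b^*$ with relations $ba=q^2ab$, $a^*a+b^2=1$, $q^4aa^*+b^2=q^4$. Let $\hat{\mathcal{H}}$ be the Hilbert space with orthonormal basis $\ket{l,m}$, $l\in\mathbb{N}+\tfrac12$, $m=-l,\dots,l$, and $\mathcal{H}=\hat{\mathcal{H}}\otimes\mathbb{C}^2=\mathcal{H}_+\oplus\mathcal{H}_-$. Let $\pi=\pi_+\oplus\pi_-$ be the spin representation of Dąbrowski–Landi–Paschke–Sitarz, where with $[x]=(q^x-q^{-x})/(q-q^{-1})$, $\pi_\pm(a)\ket{l,m}=q^{m-l-\frac12}\frac{\sqrt{[l+m+1][l+m+2]}}{[2l+2]}\ket{l+1,m+1}-q^{m+l+\frac12}\frac{\sqrt{[l-m-1][l-m]}}{[2l]}\ket{l-1,m+1}\pm\frac{(1+q^2)q^{m-\frac12}}{[2l][2l+2]}\sqrt{[l+m+1][l-m]}\ket{l,m+1}$, $\pi_\pm(b)\ket{l,m}=-q^{m+1}\frac{\sqrt{[l+m+1][l-m+1]}}{[2l+2]}\ket{l+1,m}-q^{m+1}\frac{\sqrt{[l+m][l-m]}}{[2l]}\ket{l-1,m}\pm\frac{[l-m+1][l+m]-q^2[l-m][l+m+1]}{[2l][2l+2]}\ket{l,m}$.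 The Dirac operator is $D=|D|\otimes F$ with $|D|\ket{l,m}=(l+\tfrac12)\ket{l,m}$ and $F=\begin{pmatrix}0&1\\1&0\end{pmatrix}$, grading $\gamma=\mathrm{diag}(1,-1)$. With $\rho_-=(\pi_+-\pi_-)/2$, the commutator $[F,\pi(x)]=2\rho_-(x)\otimes\begin{pmatrix}0&-1\\1&0\end{pmatrix}$ is trace class, so the cocycle $\mathrm{ch}^F_0(x)=\tfrac12\mathrm{Trace}(\gamma F[F,\pi(x)])=2\,\mathrm{Trace}_{\hat{\mathcal{H}}}\rho_-(x)$ is well defined, and its pairing with $[p']$ equals the index of $p'Fp'$. *)

theory Defs
  imports "HOL-Analysis.Analysis"
begin

text \<open>Basis labels |l,m> of the Hilbert space hat H: l in N + 1/2, m = -l, ..., l.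
  We encode a basis vector by the real pair (l,m).\<close>
definition basis_idx :: "(real \<times> real) set" where
  "basis_idx = {(l,m). \<exists>n::nat. \<exists>k::nat. l = real n + 1/2 \<and> k \<le> 2*n+1 \<and> m = real k - l}"

definition qnum :: "real \<Rightarrow> real \<Rightarrow> real" where
  "qnum q x = (q powr x - q powr (-x)) / (q - inverse q)"

text \<open>Bounded operators on hat H are represented by their matrix coefficients:
  T out in = <out | T | in>.\<close>
type_synonym op = "real \<times> real \<Rightarrow> real \<times> real \<Rightarrow> complex"

definition id_op :: op where
  "id_op x y = (if x = y \<and> x \<in> basis_idx then 1 else 0)"

text \<open>pi_s(a), for sign s = 1 (pi_+) or s = -1 (pi_-).\<close>
definition pi_a :: "real \<Rightarrow> real \<Rightarrow> op" where
  "pi_a q s = (\<lambda>(l',m') (l,m).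
     if (l,m) \<in> basis_idx \<and> (l',m') \<in> basis_idx then complex_of_real
       (if l' = l + 1 \<and> m' = m + 1 then
          q powr (m - l - 1/2) * sqrt (qnum q (l+m+1) * qnum q (l+m+2)) / qnum q (2*l+2)
        else if l' = l - 1 \<and> m' = m + 1 then
          - (q powr (m + l + 1/2)) * sqrt (qnum q (l-m-1) * qnum q (l-m)) / qnum q (2*l)
        else if l' = l \<and> m' = m + 1 then
          s * (1 + q^2) * q powr (m - 1/2) / (qnum q (2*l) * qnum q (2*l+2))
            * sqrt (qnum q (l+m+1) * qnum q (l-m))
        else 0)
     else 0)"

definition pi_b :: "real \<Rightarrow> real \<Rightarrow> op" where
  "pi_b q s = (\<lambda>(l',m') (l,m).
     if (l,m) \<in> basis_idx \<and> (l',m') \<in> basis_idx then complex_of_real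
       (if l' = l + 1 \<and> m' = m then
          - (q powr (m + 1)) * sqrt (qnum q (l+m+1) * qnum q (l-m+1)) / qnum q (2*l+2)
        else if l' = l - 1 \<and> m' = m then
          - (q powr (m + 1)) * sqrt (qnum q (l+m) * qnum q (l-m)) / qnum q (2*l)
        else if l' = l \<and> m' = m then
          s * (qnum q (l-m+1) * qnum q (l+m) - q^2 * qnum q (l-m) * qnum q (l+m+1))
            / (qnum q (2*l) * qnum q (2*l+2))
        else 0)
     else 0)"

definition pi_astar :: "real \<Rightarrow> real \<Rightarrow> op" where
  "pi_astar q s = (\<lambda>x y. cnj (pi_a q s y x))"

definition pi_pprime :: "real \<Rightarrow> real \<Rightarrow> nat \<Rightarrow> nat \<Rightarrow> op" where
  "pi_pprime q s i j = (\<lambda>x y.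
     if i = 0 \<and> j = 0 then (id_op x y + pi_b q s x y) / 2
     else if i = 0 \<and> j = 1 then pi_astar q s x y / 2
     else if i = 1 \<and> j = 0 then pi_a q s x y / 2
     else (id_op x y - complex_of_real (inverse (q^2)) * pi_b q s x y) / 2)"

definition rho_minus :: "(real \<Rightarrow> op) \<Rightarrow> op" where
  "rho_minus P = (\<lambda>x y. (P 1 x y - P (-1) x y) / 2)"

definition trace_hat :: "op \<Rightarrow> complex" where
  "trace_hat T = infsum (\<lambda>k. T k k) basis_idx"

definition chF0 :: "(real \<Rightarrow> op) \<Rightarrow> complex" where
  "chF0 P = 2 * trace_hat (rho_minus P)"

definition chF_pprime :: "real \<Rightarrow> complex" where
  "chF_pprime q = (\<Sum>i<2. chF0 (\<lambda>s. pi_pprime q s i i))"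

end

theory Submission
  imports Defs
begin

(* Only the diagonal of rho_-(p') enters the trace.  Writing <l,m| pi_s(b) |l,m> = s * b_diag q l m
   for the sign-dependent part, the entries 1 + b and 1 - q^-2 b of p' contribute 1/2 and -q^-2/2
   times b_diag q l m, so ch^F([p']) = (1 - q^-2) * (sum of b_diag q l m over all labels).
   With l = n + 1/2, m = k - l and z = q^2 the diagonal coefficients are rational functions of
   z^n and z^k; summed over k they telescope, the row n contributing t n - t (n+1) with
   t n = (2n+1) z^(n+1) / (1 - z^(2n+1)).  They are absolutely summable, bounded by
   2 z^(n+1) / (1 - z), so the whole sum is t 0 = q^2 / (1 - q^2), and the pairing is -1. *)

lemma divide_eq_divide_common_factor:
  fixes N1 N2 D1 D2 c :: "'a::field"
  assumes "N1 = c * N2" "D1 = c * D2" "c \<noteq> 0"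
  shows "N1 / D1 = N2 / D2"
  using assms by simp

lemma odd_power_neq_one:
  fixes z :: real
  assumes "z \<noteq> 1" "odd j"
  shows "z ^ j \<noteq> 1"
proof
  assume "z ^ j = 1"
  then have "\<bar>z\<bar> = 1" using power_eq_1_iff[of z j] \<open>odd j\<close> by auto
  then show False using assms \<open>z ^ j = 1\<close> by (auto simp: abs_if split: if_splits)
qed

lemma summable_Suc_times_power:
  fixes z :: real
  assumes "\<bar>z\<bar> < 1"
  shows "summable (\<lambda>n. real (Suc n) * z^n)"
  using sums_summable[OF geometric_deriv_sums[of z]] assms by simp

lemma abs_summable_on_Sigma_UNIV_finite:
  fixes f :: "nat \<times> 'b \<Rightarrow> 'a::real_normed_vector"
  assumes "\<And>n. finite (B n)" and "summable (\<lambda>n. \<Sum>k\<in>B n. norm (f (n, k)))"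
  shows "(\<lambda>p. norm (f p)) summable_on Sigma UNIV B"
proof (rule Infinite_Sum.abs_summable_on_Sigma_iff[THEN iffD2], intro conjI ballI)
  show "(\<lambda>k. norm (f (n, k))) summable_on B n" for n
    using assms(1) by simp
  have "(\<lambda>n. \<Sum>k\<in>B n. norm (f (n, k))) summable_on UNIV"
    using assms(2) by (rule summable_nonneg_imp_summable_on) (simp add: sum_nonneg)
  then show "(\<lambda>n. norm (\<Sum>\<^sub>\<infinity>k\<in>B n. norm (f (n, k)))) summable_on UNIV"
    using assms(1) by (simp add: sum_nonneg)
qed

lemma has_sum_Sigma_UNIV_telescoping:
  fixes f :: "nat \<times> 'b \<Rightarrow> 'a::banach"
  assumes "\<And>n. finite (B n)" and "(\<lambda>p. norm (f p)) summable_on Sigma UNIV B"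
    and "\<And>n. (\<Sum>k\<in>B n. f (n, k)) = g n - g (Suc n)" and "g \<longlonglongrightarrow> 0"
  shows "(f has_sum g 0) (Sigma UNIV B)"
proof -
  have "f summable_on Sigma UNIV B"
    using assms(2) by (rule abs_summable_summable)
  then have total: "(f has_sum infsum f (Sigma UNIV B)) (Sigma UNIV B)"
    by (rule has_sum_infsum)
  have "((\<lambda>n. g n - g (Suc n)) has_sum infsum f (Sigma UNIV B)) UNIV"
    using total by (rule has_sum_SigmaD) (simp add: assms(1) flip: assms(3))
  then have "(\<lambda>n. g n - g (Suc n)) sums infsum f (Sigma UNIV B)"
    by (rule has_sum_imp_sums)
  moreover have "(\<lambda>n. g n - g (Suc n)) sums g 0"
    using telescope_sums'[OF assms(4)] by simp
  ultimately show ?thesis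
    using total sums_unique2 by metis
qed

definition b_diag :: "real \<Rightarrow> real \<Rightarrow> real \<Rightarrow> real" where
  "b_diag q l m = (qnum q (l-m+1) * qnum q (l+m) - q^2 * qnum q (l-m) * qnum q (l+m+1))
            / (qnum q (2*l) * qnum q (2*l+2))"

lemma b_diag_closed_form:
  assumes q: "0 < q" "q \<noteq> 1"
  shows "b_diag q l m = q powr (2*l+1) * ((1-q^2) * (1 + q powr (4*l+2)) - (1-q^4) * q powr (2*(l+m)))
                        / ((1 - q powr (4*l)) * (1 - q powr (4*l+4)))"
proof -
  define X where "X = q powr l"
  define Y where "Y = q powr m"
  have XY: "X > 0" "Y > 0" using q by (auto simp: X_def Y_def)
  have "q^2 \<noteq> 1" using q by (simp add: power2_eq_1_iff)
  then have q_inv: "q - inverse q \<noteq> 0"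
    using q by (auto simp: field_simps power2_eq_square)
  have powers: "q powr (l-m+1) = q*X/Y" "q powr (-(l-m+1)) = Y/(q*X)"
     "q powr (l+m) = X*Y" "q powr (-(l+m)) = 1/(X*Y)"
     "q powr (l-m) = X/Y" "q powr (-(l-m)) = Y/X"
     "q powr (l+m+1) = q*X*Y" "q powr (-(l+m+1)) = 1/(q*X*Y)"
     "q powr (2*l) = X^2" "q powr (-(2*l)) = 1/X^2"
     "q powr (2*l+2) = q^2*X^2" "q powr (-(2*l+2)) = 1/(q^2*X^2)"
     "q powr (2*l+1) = q*X^2" "q powr (4*l+2) = q^2*X^4" "q powr (2*(l+m)) = X^2*Y^2"
     "q powr (4*l) = X^4" "q powr (4*l+4) = q^4*X^4"
    using q unfolding X_def Y_def
    by (simp_all add: powr_add powr_diff powr_minus_divide powr_power)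
  have cancel_qnum_denominators: "(a/k * (b/k) - s * (c/k) * (d/k)) / (e/k * (f/k)) = (a*b - s*c*d) / (e*f)"
    if "k \<noteq> 0" for a b c d e f s k :: real
    by (rule divide_eq_divide_common_factor[where c = "1 / k^2"]) (use that in \<open>simp_all add: field_simps power2_eq_square\<close>)
  show ?thesis
    unfolding b_diag_def qnum_def powers cancel_qnum_denominators[OF q_inv]
  proof (rule divide_eq_divide_common_factor[where c = "1 / (q^2 * X^4)"])
    show "(q*X/Y - Y/(q*X)) * (X*Y - 1/(X*Y)) - q^2 * (X/Y - Y/X) * (q*X*Y - 1/(q*X*Y))
        = 1 / (q^2 * X^4) * (q*X^2 * ((1-q^2) * (1 + q^2*X^4) - (1-q^4) * (X^2*Y^2)))"
      using XY q by (simp add: field_simps; algebra)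
    show "(X^2 - 1/X^2) * (q^2*X^2 - 1/(q^2*X^2)) = 1 / (q^2 * X^4) * ((1 - X^4) * (1 - q^4*X^4))"
      using XY q by (simp add: field_simps; algebra)
  qed (use XY q in simp)
qed

definition b_diag_seq :: "real \<Rightarrow> nat \<Rightarrow> nat \<Rightarrow> real" where
  "b_diag_seq z n k = z^(n+1) * ((1-z) * (1 + z^(2*n+2)) - (1-z^2) * z^k)
                      / ((1 - z^(2*n+1)) * (1 - z^(2*n+3)))"

definition b_diag_tail :: "real \<Rightarrow> nat \<Rightarrow> real" where
  "b_diag_tail z n = (2 * real n + 1) * z^(n+1) / (1 - z^(2*n+1))"

lemma sum_b_diag_seq:
  fixes z :: real
  assumes "z \<noteq> 1"
  shows "(\<Sum>k<2*n+2. b_diag_seq z n k) = b_diag_tail z n - b_diag_tail z (Suc n)"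
proof -
  define y where "y = z^n"
  define A where "A = 1 - z*y^2"
  define B where "B = 1 - z^3*y^2"
  have powers: "z^(n+1) = z*y" "z^(2*n+2) = z^2*y^2" "1 - z^(2*n+1) = A" "1 - z^(2*n+3) = B"
    "z^(Suc n + 1) = z^2*y" "1 - z^(2 * Suc n + 1) = B"
    by (simp_all add: A_def B_def y_def power_add power_mult_distrib flip: power_mult)
       (simp_all add: mult.commute power2_eq_square power3_eq_cube)
  have nonzero: "z \<noteq> 1" "A \<noteq> 0" "B \<noteq> 0"
    using assms odd_power_neq_one[OF assms, of "2*n+1"] odd_power_neq_one[OF assms, of "2*n+3"] powers
    by auto
  have geom: "(\<Sum>k<2*n+2. z^k) = (1 - z^(2*n+2)) / (1 - z)"
    using assms by (simp only: sum_gp_strict if_False)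
  have "(\<Sum>k<2*n+2. b_diag_seq z n k)
      = (\<Sum>k<2*n+2. z*y * (1-z) * (1 + z^2*y^2) / (A*B) - z*y * (1-z^2) / (A*B) * z^k)"
    unfolding b_diag_seq_def powers
    by (intro sum.cong refl) (simp add: right_diff_distrib diff_divide_distrib mult_ac)
  also have "\<dots> = (2 * real n + 2) * (z*y * (1-z) * (1 + z^2*y^2) / (A*B))
                    - z*y * (1-z^2) / (A*B) * (\<Sum>k<2*n+2. z^k)"
    unfolding sum_subtractf sum_distrib_left[symmetric] by simp
  also have "\<dots> = b_diag_tail z n - b_diag_tail z (Suc n)"
    unfolding geom b_diag_tail_def powers using nonzero
    by (simp add: field_simps) (simp add: A_def B_def; algebra)
  finally show ?thesis .
qed

lemma abs_b_diag_seq_le: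
  fixes z :: real
  assumes "0 \<le> z" "z < 1"
  shows "\<bar>b_diag_seq z n k\<bar> \<le> 2 * z^(n+1) / (1 - z)"
proof -
  define a where "a = (1-z) * (1 + z^(2*n+2))"
  define b where "b = (1-z^2) * z^k"
  have "z^(2*n+2) \<le> 1" "z^k \<le> 1"
    using assms by (simp_all only: power_le_one less_imp_le)
  then have "a \<le> (1-z) * 2" "b \<le> (1-z^2) * 1"
    unfolding a_def b_def using assms by (intro mult_left_mono; simp add: power_le_one)+
  moreover have "1 - z^2 \<le> (1-z) * 2"
    using zero_le_power2[of "1-z"] by (simp add: power2_eq_square algebra_simps)
  moreover have "0 \<le> a" "0 \<le> b"
    unfolding a_def b_def using assms by (simp_all add: power_le_one)
  ultimately have num: "\<bar>a - b\<bar> \<le> 2 * (1-z)" by (simp add: abs_le_iff algebra_simps)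
  have "z^(2*n+1) \<le> z" "z^(2*n+3) \<le> z"
    using assms power_decreasing[of 1 "2*n+1" z] power_decreasing[of 1 "2*n+3" z] by simp_all
  then have den: "(1-z)^2 \<le> (1 - z^(2*n+1)) * (1 - z^(2*n+3))"
    unfolding power2_eq_square using assms by (intro mult_mono) auto
  have "0 < (1-z)^2" using assms by simp
  then have den_pos: "0 < (1 - z^(2*n+1)) * (1 - z^(2*n+3))" using den by (rule less_le_trans)
  have "\<bar>b_diag_seq z n k\<bar> = z^(n+1) * \<bar>a - b\<bar> / ((1 - z^(2*n+1)) * (1 - z^(2*n+3)))"
    unfolding b_diag_seq_def a_def[symmetric] b_def[symmetric]
    using assms by (simp only: abs_divide abs_of_pos[OF den_pos]) (simp add: abs_mult)
  also have "\<dots> \<le> z^(n+1) * (2 * (1-z)) / (1-z)^2"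
    using num den assms by (intro frac_le mult_left_mono) auto
  also have "\<dots> = 2 * z^(n+1) / (1 - z)"
    using assms by (simp add: power2_eq_square divide_simps)
  finally show ?thesis .
qed

definition nat_labels :: "(nat \<times> nat) set" where
  "nat_labels = (SIGMA n:UNIV. {..<2*n+2})"

lemma b_diag_seq_abs_summable:
  fixes z :: real
  assumes "0 \<le> z" "z < 1"
  shows "(\<lambda>p. norm (case_prod (b_diag_seq z) p)) summable_on nat_labels"
  unfolding nat_labels_def
proof (rule abs_summable_on_Sigma_UNIV_finite)
  have row_bound: "(\<Sum>k<2*n+2. \<bar>b_diag_seq z n k\<bar>) \<le> 4 * z / (1 - z) * (real (Suc n) * z^n)" for n
  proof -
    have "(\<Sum>k<2*n+2. \<bar>b_diag_seq z n k\<bar>) \<le> (\<Sum>k<2*n+2. 2 * z^(n+1) / (1 - z))"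
      using abs_b_diag_seq_le[OF assms] by (rule sum_mono)
    also have "\<dots> = 4 * z / (1 - z) * (real (Suc n) * z^n)"
      by (simp add: field_simps)
    finally show ?thesis .
  qed
  have "summable (\<lambda>n. 4 * z / (1 - z) * (real (Suc n) * z^n))"
    using assms by (intro summable_mult summable_Suc_times_power) simp
  then show "summable (\<lambda>n. \<Sum>k<2*n+2. norm (case_prod (b_diag_seq z) (n, k)))"
    by (rule summable_comparison_test') (simp only: case_prod_conv real_norm_def abs_sum_abs row_bound)
qed simp

lemma b_diag_tail_tendsto_zero:
  fixes z :: real
  assumes "0 \<le> z" "z < 1"
  shows "b_diag_tail z \<longlonglongrightarrow> 0"
proof (rule Lim_null_comparison)
  show "\<forall>\<^sub>F n in sequentially. norm (b_diag_tail z n) \<le> 2 * z / (1 - z) * (real (Suc n) * z^n)"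
  proof (intro always_eventually allI)
    fix n
    have "z^(2*n+1) \<le> z"
      using assms power_decreasing[of 1 "2*n+1" z] by simp
    then have den: "0 < 1 - z" "1 - z \<le> 1 - z^(2*n+1)"
      using assms by simp_all
    have "norm (b_diag_tail z n) = (2 * real n + 1) * z^(n+1) / (1 - z^(2*n+1))"
      unfolding b_diag_tail_def using den assms by simp
    also have "\<dots> \<le> (2 * real n + 1) * z^(n+1) / (1 - z)"
      by (rule divide_left_mono) (use den assms in auto)
    also have "\<dots> \<le> (2 * real n + 2) * z^(n+1) / (1 - z)"
      by (intro divide_right_mono mult_right_mono) (use assms in auto)
    also have "\<dots> = 2 * z / (1 - z) * (real (Suc n) * z^n)"
      by (simp add: field_simps)
    finally show "norm (b_diag_tail z n) \<le> 2 * z / (1 - z) * (real (Suc n) * z^n)" .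
  qed
  show "(\<lambda>n. 2 * z / (1 - z) * (real (Suc n) * z^n)) \<longlonglongrightarrow> 0"
    using assms by (intro tendsto_mult_right_zero summable_LIMSEQ_zero summable_Suc_times_power) simp
qed

lemma b_diag_seq_has_sum:
  fixes z :: real
  assumes "0 \<le> z" "z < 1"
  shows "(case_prod (b_diag_seq z) has_sum z / (1 - z)) nat_labels"
proof -
  have "(case_prod (b_diag_seq z) has_sum b_diag_tail z 0) nat_labels"
    unfolding nat_labels_def
  proof (rule has_sum_Sigma_UNIV_telescoping)
    show "(\<lambda>p. norm (case_prod (b_diag_seq z) p)) summable_on (SIGMA n:UNIV. {..<2*n+2})"
      using b_diag_seq_abs_summable[OF assms] by (simp only: nat_labels_def)
    show "(\<Sum>k<2*n+2. case_prod (b_diag_seq z) (n, k)) = b_diag_tail z n - b_diag_tail z (Suc n)" for n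
      unfolding case_prod_conv by (rule sum_b_diag_seq) (use assms in simp)
  qed (use b_diag_tail_tendsto_zero[OF assms] in auto)
  then show ?thesis by (simp add: b_diag_tail_def)
qed

definition label_of_nat :: "nat \<times> nat \<Rightarrow> real \<times> real" where
  "label_of_nat = (\<lambda>(n, k). (real n + 1/2, real k - (real n + 1/2)))"

lemma b_diag_label_of_nat:
  assumes "0 < q" "q \<noteq> 1"
  shows "case_prod (b_diag q) (label_of_nat p) = case_prod (b_diag_seq (q^2)) p"
proof (cases p)
  case (Pair n k)
  have q_powr: "q powr (2 * real j) = (q^2)^j" for j
    using assms by (simp add: powr_power[symmetric] powr_realpow mult.commute)
  have exponents: "2 * (real n + 1/2) + 1 = 2 * real (n+1)"
    "2 * (real n + 1/2 + (real k - (real n + 1/2))) = 2 * real k"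
    "4 * (real n + 1/2) = 2 * real (2*n+1)" "2 * real (2*n+1) + 2 = 2 * real (2*n+2)"
    "2 * real (2*n+1) + 4 = 2 * real (2*n+3)"
    by simp_all
  show ?thesis
    unfolding Pair label_of_nat_def case_prod_conv b_diag_closed_form[OF assms] exponents q_powr
      b_diag_seq_def
    by simp
qed

lemma bij_betw_label_of_nat: "bij_betw label_of_nat nat_labels basis_idx"
proof (rule bij_betw_imageI)
  show "inj_on label_of_nat nat_labels"
    unfolding inj_on_def label_of_nat_def nat_labels_def by auto
  show "label_of_nat ` nat_labels = basis_idx"
  proof
    show "label_of_nat ` nat_labels \<subseteq> basis_idx"
      unfolding label_of_nat_def nat_labels_def basis_idx_def by force
    show "basis_idx \<subseteq> label_of_nat ` nat_labels"
    proof
      fix x assume "x \<in> basis_idx"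
      then obtain n k where "x = (real n + 1/2, real k - (real n + 1/2))" "k \<le> 2*n+1"
        unfolding basis_idx_def by auto
      then show "x \<in> label_of_nat ` nat_labels"
        unfolding label_of_nat_def nat_labels_def by (intro image_eqI[where x = "(n, k)"]) auto
    qed
  qed
qed

lemma b_diag_abs_summable:
  assumes "0 < q" "q < 1"
  shows "(\<lambda>x. norm (case_prod (b_diag q) x)) summable_on basis_idx"
proof -
  have "(\<lambda>p. norm (case_prod (b_diag q) (label_of_nat p))) summable_on nat_labels"
    using b_diag_seq_abs_summable[of "q^2"] assms
    by (simp add: b_diag_label_of_nat power_less_one_iff)
  then show ?thesis
    using summable_on_reindex_bij_betw[OF bij_betw_label_of_nat] by blast
qed

lemma b_diag_has_sum:
  assumes "0 < q" "q < 1"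
  shows "(case_prod (b_diag q) has_sum q^2 / (1 - q^2)) basis_idx"
proof -
  have "((\<lambda>p. case_prod (b_diag q) (label_of_nat p)) has_sum q^2 / (1 - q^2)) nat_labels"
    using b_diag_seq_has_sum[of "q^2"] assms
    by (simp add: b_diag_label_of_nat power_less_one_iff)
  then show ?thesis
    using has_sum_reindex_bij_betw[OF bij_betw_label_of_nat] by blast
qed

lemma pi_b_diag:
  assumes "x \<in> basis_idx"
  shows "pi_b q s x x = of_real (s * case_prod (b_diag q) x)"
  using assms by (cases x) (simp add: pi_b_def b_diag_def)

lemma rho_minus_pi_pprime_diag:
  assumes "x \<in> basis_idx"
  shows "rho_minus (\<lambda>s. pi_pprime q s i i) x x
           = of_real ((if i = 0 then 1/2 else - inverse (q^2) / 2) * case_prod (b_diag q) x)"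
  using assms
  by (simp add: rho_minus_def pi_pprime_def pi_b_diag id_op_def field_simps)

lemma rho_minus_pi_pprime_trace:
  fixes q :: real and i :: nat
  assumes "0 < q" "q < 1"
  defines "w \<equiv> if i = 0 then 1/2 else - inverse (q^2) / 2"
  shows "(\<lambda>x. norm (rho_minus (\<lambda>s. pi_pprime q s i i) x x)) summable_on basis_idx"
    and "trace_hat (rho_minus (\<lambda>s. pi_pprime q s i i)) = of_real (w * (q^2 / (1 - q^2)))"
proof -
  have diag: "rho_minus (\<lambda>s. pi_pprime q s i i) x x = of_real (w * case_prod (b_diag q) x)"
    if "x \<in> basis_idx" for x
    using rho_minus_pi_pprime_diag[OF that] unfolding w_def .
  have "(\<lambda>x. \<bar>w\<bar> * norm (case_prod (b_diag q) x)) summable_on basis_idx"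
    using b_diag_abs_summable[OF assms(1,2)] by (rule summable_on_cmult_right)
  then show "(\<lambda>x. norm (rho_minus (\<lambda>s. pi_pprime q s i i) x x)) summable_on basis_idx"
    by (rule summable_on_cong[THEN iffD1, rotated]) (simp add: diag norm_mult)
  have "((\<lambda>x. of_real (w * case_prod (b_diag q) x) :: complex) has_sum of_real (w * (q^2 / (1 - q^2))))
          basis_idx"
    using b_diag_has_sum[OF assms(1,2)] by (intro has_sum_of_real has_sum_cmult_right)
  then have "((\<lambda>x. rho_minus (\<lambda>s. pi_pprime q s i i) x x) has_sum of_real (w * (q^2 / (1 - q^2))))
               basis_idx"
    by (rule has_sum_cong[THEN iffD1, rotated]) (simp add: diag)
  then show "trace_hat (rho_minus (\<lambda>s. pi_pprime q s i i)) = of_real (w * (q^2 / (1 - q^2)))"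
    unfolding trace_hat_def by (rule infsumI)
qed

theorem mainTheorem11:
  fixes q :: real
  assumes "0 < q" and "q < 1"
  shows "(\<forall>i<(2::nat). ((\<lambda>k. norm (rho_minus (\<lambda>s. pi_pprime q s i i) k k)) summable_on basis_idx))
         \<and> chF_pprime q = - 1 \<and> chF_pprime q \<noteq> 0"
proof -
  define T where "T = q^2 / (1 - q^2)"
  have "chF_pprime q
      = 2 * trace_hat (rho_minus (\<lambda>s. pi_pprime q s 0 0)) + 2 * trace_hat (rho_minus (\<lambda>s. pi_pprime q s 1 1))"
    by (simp add: chF_pprime_def chF0_def numeral_2_eq_2)
  also have "\<dots> = of_real (2 * (1/2 * T) + 2 * (- inverse (q^2) / 2 * T))"
    unfolding rho_minus_pi_pprime_trace(2)[OF assms] T_def by simp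
  also have "\<dots> = -1"
  proof -
    have "(1 - inverse t) * (t / (1 - t)) = -1" if "t \<noteq> 0" "t \<noteq> 1" for t :: real
      using that by (simp add: field_simps)
    then have "(1 - inverse (q^2)) * T = -1"
      unfolding T_def using assms by (simp add: power2_eq_1_iff)
    then have "2 * (1/2 * T) + 2 * (- inverse (q^2) / 2 * T) = -1"
      by (simp add: algebra_simps)
    then show ?thesis
      by simp
  qed
  finally show ?thesis
    using rho_minus_pi_pprime_trace(1)[OF assms] by simp
qed

end
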